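(* Let $(M,s)$ be an initial $\mathbf{S5}$-state of a definite action theory such that every $u\in M[S]$ is reachable from $s$. Let $u,v\in M[S]$ with $M[\pi](u)=M[\pi](v)$. Then for every agent $i$ and every $x\in M[S]$ with $(u,x)\in M[i]$ there exists $y\in M[S]$ with $(v,y)\in M[i]$ and $M[\pi](x)=M[\pi](y)$.
   Context: Agents $\mathcal{AG}=\{1,\dots,n\}$, finite set of fluents $\mathcal F$. Belief formulae are built from propositional (fluent) formulae over $\mathcal F$ with $\mathbf B_i$, Boolean connectives and $\mathbf E_\alpha,\mathbf C_\alpha$; $\mathbf C=\mathbf C_{\mathcal{AG}}$. Kripke structures $M$: worlds $M[S]$, interpretations $M[\pi](u)\subseteq\mathcal F$, relations $M[i]$; state $(M,s)$; standard semantics ($\mathbf B_i\varphi$: $\varphi$ at all $M[i]$-successors; $\mathbf E_\alpha$: all $\mathbf B_i$, $i\in\alpha$; $\mathbf C_\alpha\varphi$: $\mathbf E^k_\alpha\varphi$ for all $k\ge0$). $\mathbf{S5}$-state: every $M[i]$ an equivalence relation. $v$ is reachable from $u$ if connected by a finite (possibly empty) chain of pairs each in some $M[j]$. An action theory $(I,D)$ consists of a domain $D$ (action descriptions) and a set $I$ of statements "initially $\varphi$"; an initial $\mathbf{S5}$-state of it is an $\mathbf{S5}$-state satisfying every $\varphi$ with "initially $\varphi$" $\in I$. It is definite if every statement of $I$ is of one of the forms initially $\varphi$, initially $\mathbf C\varphi$, initially $\mathbf C(\mathbf B_i\varphi)$, initially $\mathbf C(\mathbf B_i\varphi\vee\mathbf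 B_i\neg\varphi)$, initially $\mathbf C(\neg\mathbf B_i\varphi\wedge\neg\mathbf B_i\neg\varphi)$ ($\varphi$ fluent formula, $i$ agent), and for every fluent formula $\varphi$ and agent $i$, $I$ contains a statement of one of the last three forms with this $i$ and $\varphi$. *)

theory Defs
  imports Main
begin

datatype 'f fform = FAtom 'f | FNot "'f fform" | FAnd "'f fform" "'f fform" | FOr "'f fform" "'f fform"

datatype ('f, 'ag) bform =
    BFl "'f fform"
  | BB 'ag "('f, 'ag) bform"
  | BNot "('f, 'ag) bform"
  | BAnd "('f, 'ag) bform" "('f, 'ag) bform"
  | BOr "('f, 'ag) bform" "('f, 'ag) bform"
  | BE "'ag set" "('f, 'ag) bform"
  | BC "'ag set" "('f, 'ag) bform"

text \<open>Kripke structure: worlds M[S], interpretation M[pi], relations M[i].\<close>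
record ('w, 'f, 'ag) kripke =
  worlds :: "'w set"
  interp :: "'w \<Rightarrow> 'f set"
  rel :: "'ag \<Rightarrow> ('w \<times> 'w) set"

definition wf_kripke :: "('w, 'f, 'ag) kripke \<Rightarrow> bool" where
  "wf_kripke M \<longleftrightarrow> (\<forall>i. rel M i \<subseteq> worlds M \<times> worlds M)"

fun fsat :: "'f set \<Rightarrow> 'f fform \<Rightarrow> bool" where
  "fsat I (FAtom f) = (f \<in> I)"
| "fsat I (FNot p) = (\<not> fsat I p)"
| "fsat I (FAnd p q) = (fsat I p \<and> fsat I q)"
| "fsat I (FOr p q) = (fsat I p \<or> fsat I q)"

definition Eop :: "('w, 'f, 'ag) kripke \<Rightarrow> 'ag set \<Rightarrow> 'w set \<Rightarrow> 'w set" where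
  "Eop M A X = {u \<in> worlds M. \<forall>i\<in>A. \<forall>v. (u, v) \<in> rel M i \<longrightarrow> v \<in> X}"

fun ext :: "('w, 'f, 'ag) kripke \<Rightarrow> ('f, 'ag) bform \<Rightarrow> 'w set" where
  "ext M (BFl p) = {u \<in> worlds M. fsat (interp M u) p}"
| "ext M (BB i \<phi>) = {u \<in> worlds M. \<forall>v. (u, v) \<in> rel M i \<longrightarrow> v \<in> ext M \<phi>}"
| "ext M (BNot \<phi>) = worlds M - ext M \<phi>"
| "ext M (BAnd \<phi> \<psi>) = ext M \<phi> \<inter> ext M \<psi>"
| "ext M (BOr \<phi> \<psi>) = ext M \<phi> \<union> ext M \<psi>"
| "ext M (BE A \<phi>) = Eop M A (ext M \<phi>)"
| "ext M (BC A \<phi>) = (\<Inter>k. (Eop M A ^^ k) (ext M \<phi>))"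

definition holds :: "('w, 'f, 'ag) kripke \<Rightarrow> 'w \<Rightarrow> ('f, 'ag) bform \<Rightarrow> bool" where
  "holds M s \<phi> \<longleftrightarrow> s \<in> ext M \<phi>"

definition S5_state :: "('w, 'f, 'ag) kripke \<Rightarrow> 'w \<Rightarrow> bool" where
  "S5_state M s \<longleftrightarrow> wf_kripke M \<and> s \<in> worlds M \<and> (\<forall>i. equiv (worlds M) (rel M i))"

definition reachable :: "('w, 'f, 'ag) kripke \<Rightarrow> 'w \<Rightarrow> 'w \<Rightarrow> bool" where
  "reachable M u v \<longleftrightarrow> (u, v) \<in> (\<Union>j. rel M j)\<^sup>*"

abbreviation Call :: "('f, 'ag) bform \<Rightarrow> ('f, 'ag) bform" where
  "Call \<phi> \<equiv> BC UNIV \<phi>"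

text \<open>An initial-state description I is the set of formulae phi with "initially phi" in I.\<close>
definition definite :: "('f, 'ag) bform set \<Rightarrow> bool" where
  "definite I \<longleftrightarrow>
     (\<forall>\<psi>\<in>I. (\<exists>p. \<psi> = BFl p)
           \<or> (\<exists>p. \<psi> = Call (BFl p))
           \<or> (\<exists>p i. \<psi> = Call (BB i (BFl p)))
           \<or> (\<exists>p i. \<psi> = Call (BOr (BB i (BFl p)) (BB i (BFl (FNot p)))))
           \<or> (\<exists>p i. \<psi> = Call (BAnd (BNot (BB i (BFl p))) (BNot (BB i (BFl (FNot p)))))))
   \<and> (\<forall>p i. Call (BB i (BFl p)) \<in> I
           \<or> Call (BOr (BB i (BFl p)) (BB i (BFl (FNot p)))) \<in> I
           \<or> Call (BAnd (BNot (BB i (BFl p))) (BNot (BB i (BFl (FNot p))))) \<in> I)"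

definition initial_S5_state :: "('f, 'ag) bform set \<Rightarrow> ('w, 'f, 'ag) kripke \<Rightarrow> 'w \<Rightarrow> bool" where
  "initial_S5_state I M s \<longleftrightarrow> S5_state M s \<and> (\<forall>\<phi>\<in>I. holds M s \<phi>)"

end

theory Submission
  imports Defs
begin

text \<open>Since there are finitely many fluents, the valuation of x is described by a single fluent
  formula p. Definiteness makes the agent's attitude towards p common knowledge, hence the same at
  u and at v. If i is uncertain about p, then v, like every world, has an i-successor satisfying p.
  Otherwise i's belief about p is settled at u; as u sees x, i believes p at u, so by reflexivity
  u satisfies p, so v has the valuation of x and is its own i-successor.\<close>

text \<open>The base case is a tautology; the atom in it is irrelevant.\<close>

fun char_fform :: "'f list \<Rightarrow> 'f set \<Rightarrow> 'f fform" where
  "char_fform [] S = FOr (FAtom undefined) (FNot (FAtom undefined))"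
| "char_fform (f # fs) S = FAnd (if f \<in> S then FAtom f else FNot (FAtom f)) (char_fform fs S)"

lemma fsat_char_fform_iff: "fsat T (char_fform fs S) \<longleftrightarrow> (\<forall>f\<in>set fs. f \<in> T \<longleftrightarrow> f \<in> S)"
  by (induction fs) auto

lemma ex_characteristic_fform: "\<exists>p. \<forall>T. fsat T p \<longleftrightarrow> T = (S :: 'f::finite set)"
proof -
  obtain fs :: "'f list" where "set fs = UNIV"
    using finite_list[OF finite_UNIV] by blast
  then have "\<forall>T. fsat T (char_fform fs S) \<longleftrightarrow> T = S"
    by (auto simp: fsat_char_fform_iff)
  then show ?thesis ..
qed

lemma ext_BC_subset: "ext M (BC A \<phi>) \<subseteq> ext M \<phi>"
  using INT_lower[of 0 UNIV "\<lambda>k. (Eop M A ^^ k) (ext M \<phi>)"] by simp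

lemma ext_BC_step:
  assumes "u \<in> ext M (BC A \<phi>)" and "(u, w) \<in> (\<Union>j\<in>A. rel M j)"
  shows "w \<in> ext M (BC A \<phi>)"
proof -
  have "w \<in> (Eop M A ^^ k) (ext M \<phi>)" for k
  proof -
    have "u \<in> (Eop M A ^^ Suc k) (ext M \<phi>)"
      using assms(1) by (simp del: funpow.simps)
    then have "u \<in> Eop M A ((Eop M A ^^ k) (ext M \<phi>))"
      by simp
    then show ?thesis
      using assms(2) by (auto simp: Eop_def)
  qed
  then show ?thesis by simp
qed

lemma ext_BC_rtrancl:
  assumes "(u, w) \<in> (\<Union>j\<in>A. rel M j)\<^sup>*" and "u \<in> ext M (BC A \<phi>)"
  shows "w \<in> ext M (BC A \<phi>)"
  using assms by induction (auto intro: ext_BC_step simp del: ext.simps)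

lemma initial_common_belief:
  assumes "initial_S5_state I M s" and "Call \<phi> \<in> I" and "reachable M s w"
  shows "w \<in> ext M \<phi>"
proof -
  have "s \<in> ext M (Call \<phi>)"
    using assms(1,2) unfolding initial_S5_state_def holds_def by (simp del: ext.simps)
  with assms(3) have "w \<in> ext M (Call \<phi>)"
    unfolding reachable_def by (rule ext_BC_rtrancl)
  then show ?thesis
    by (rule subsetD[OF ext_BC_subset])
qed

lemma S5_state_rel_refl: "S5_state M s \<Longrightarrow> w \<in> worlds M \<Longrightarrow> (w, w) \<in> rel M i"
  unfolding S5_state_def by (meson equivE refl_onD)

lemma S5_state_rel_worlds: "S5_state M s \<Longrightarrow> (w, y) \<in> rel M i \<Longrightarrow> y \<in> worlds M"
  unfolding S5_state_def wf_kripke_def by blast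

lemma S5_state_belief_factive: "S5_state M s \<Longrightarrow> w \<in> ext M (BB i \<phi>) \<Longrightarrow> w \<in> ext M \<phi>"
  using S5_state_rel_refl by fastforce

lemma definite_believes_or_considers_possible:
  assumes "definite I" and "initial_S5_state I M s"
    and "\<forall>w\<in>worlds M. reachable M s w"
    and "u \<in> worlds M" and "v \<in> worlds M"
    and "(u, x) \<in> rel M i" and "x \<in> ext M (BFl p)"
  shows "u \<in> ext M (BB i (BFl p)) \<or> (\<exists>y. (v, y) \<in> rel M i \<and> y \<in> ext M (BFl p))"
proof -
  have common: "w \<in> ext M \<phi>" if "Call \<phi> \<in> I" and "w \<in> worlds M" for \<phi> w
    using assms(3) that(2) by (blast intro: initial_common_belief[OF assms(2) that(1)])
  have "\<forall>p i. Call (BB i (BFl p)) \<in> I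
           \<or> Call (BOr (BB i (BFl p)) (BB i (BFl (FNot p)))) \<in> I
           \<or> Call (BAnd (BNot (BB i (BFl p))) (BNot (BB i (BFl (FNot p))))) \<in> I"
    using assms(1) unfolding definite_def by (rule conjunct2)
  then consider (believes) "Call (BB i (BFl p)) \<in> I"
    | (decided) "Call (BOr (BB i (BFl p)) (BB i (BFl (FNot p)))) \<in> I"
    | (uncertain) "Call (BAnd (BNot (BB i (BFl p))) (BNot (BB i (BFl (FNot p))))) \<in> I"
    by blast
  then show ?thesis
  proof cases
    case believes
    show ?thesis using common[OF believes assms(4)] by (rule disjI1)
  next
    case decided
    then have "u \<in> ext M (BB i (BFl p)) \<or> u \<in> ext M (BB i (BFl (FNot p)))"
      using common[OF decided assms(4)] by simp
    then show ?thesis using assms(6,7) by auto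
  next
    case uncertain
    then have "v \<notin> ext M (BB i (BFl (FNot p)))"
      using common[OF uncertain assms(5)] by simp
    then obtain y where "(v, y) \<in> rel M i" and "y \<notin> ext M (BFl (FNot p))"
      using assms(5) by auto
    moreover have "y \<in> worlds M"
      using assms(2) \<open>(v, y) \<in> rel M i\<close>
      unfolding initial_S5_state_def by (blast intro: S5_state_rel_worlds)
    ultimately show ?thesis by auto
  qed
qed

theorem lemma12:
  fixes I :: "('f::finite, 'ag::finite) bform set"
    and M :: "('w, 'f, 'ag) kripke"
  assumes "definite I"
    and "initial_S5_state I M s"
    and "\<forall>u\<in>worlds M. reachable M s u"
    and "u \<in> worlds M" and "v \<in> worlds M"
    and "interp M u = interp M v"
  shows "\<forall>i. \<forall>x\<in>worlds M. (u, x) \<in> rel M i \<longrightarrow>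
           (\<exists>y\<in>worlds M. (v, y) \<in> rel M i \<and> interp M x = interp M y)"
proof (intro allI ballI impI)
  fix i x
  assume x: "x \<in> worlds M" and ux: "(u, x) \<in> rel M i"
  have S5: "S5_state M s"
    using assms(2) by (simp add: initial_S5_state_def)
  obtain p where p: "\<And>T. fsat T p \<longleftrightarrow> T = interp M x"
    using ex_characteristic_fform by blast
  have "x \<in> ext M (BFl p)"
    using x p by simp
  then have "u \<in> ext M (BB i (BFl p)) \<or> (\<exists>y. (v, y) \<in> rel M i \<and> y \<in> ext M (BFl p))"
    by (rule definite_believes_or_considers_possible[OF assms(1-5) ux])
  then show "\<exists>y\<in>worlds M. (v, y) \<in> rel M i \<and> interp M x = interp M y"
  proof
    assume "u \<in> ext M (BB i (BFl p))"
    then have "u \<in> ext M (BFl p)"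
      by (rule S5_state_belief_factive[OF S5])
    then have "interp M v = interp M x"
      using p assms(6) by simp
    then show ?thesis
      using S5_state_rel_refl[OF S5 assms(5)] assms(5) by metis
  next
    assume "\<exists>y. (v, y) \<in> rel M i \<and> y \<in> ext M (BFl p)"
    then show ?thesis
      using p by auto
  qed
qed

end
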